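(* The GP 2 program is-dag terminates on any GP 2 host graph in which every node is marked grey and is not a root and every edge is unmarked.
   Context: GP 2 semantics. Host graphs are finite directed graphs whose nodes and edges carry labels (lists of integers and strings) and marks (nodes: unmarked, red, green, blue, grey; edges: unmarked, red, green, blue, dashed); some nodes are roots. A rule is applied by finding an injective label- and mark-compatible match of its left-hand side (mark "any" matches every mark; roots match roots) satisfying the dangling condition, then changing matched items as prescribed by the right-hand side. Commands: a rule set call applies one applicable rule, failing if none applies; $P;Q$ sequencing; $P!$ iterates $P$ until it fails (break exits the innermost loop); "try $C$ then $P$ else $Q$" runs $C$ and continues with $P$ on its result if it succeeded, else $Q$ on the original graph; "if $C$ then $P$ else $Q$" runs $C$ on a copy then $P$ or $Q$ on the original; fail causes failure. The program is-dag (labels unchanged; rule edges directed from node 1 to node 2): Main = (init; DFS!; try unroot else break)!; Check DFS = try next_edge then (try {move, ignore} else (set_flag; break)) else (try loop; try back else break) Check = if flag then fail - init: grey non-root node becomes a red root. - unroot: red root becomes blue non-root. - set_flag: red root becomes green root. - flag: green root; no change. - next_edge: red root 1, node 2 of any mark, unmarked edge 1→2; edge becomes red. - ignore: red root 1, blue node 2, red edge 1→2; edge becomes blue. - move: red root 1, grey node 2, red edge 1→2; node 1 becomes red non-root, node 2 red root, edge dashed. - back: red non-root 1, red root 2, dashed edge 1→2; node 1 becomes red root, node 2 blue non-root, edge blue. - loop: red root with an unmarked loop; node becomes green root. *)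

theory Defs
  imports Main
begin

datatype atom = AInt int | AStr string
type_synonym label = "atom list"

datatype nodemark = NUnmarked | NRed | NGreen | NBlue | NGrey
datatype edgemark = EUnmarked | ERed | EGreen | EBlue | EDashed

text \<open>Host graphs: node and edge identifiers are natural numbers; the functions
  are only meaningful on the node set V and edge set E.\<close>
record hostgraph =
  V :: "nat set"
  E :: "nat set"
  src :: "nat \<Rightarrow> nat"
  tgt :: "nat \<Rightarrow> nat"
  nlab :: "nat \<Rightarrow> label"
  elab :: "nat \<Rightarrow> label"
  nmark :: "nat \<Rightarrow> nodemark"
  emark :: "nat \<Rightarrow> edgemark"
  isroot :: "nat \<Rightarrow> bool"

definition wf_graph :: "hostgraph \<Rightarrow> bool" where
  "wf_graph G \<longleftrightarrow> finite (V G) \<and> finite (E G) \<and>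
     (\<forall>e\<in>E G. src G e \<in> V G \<and> tgt G e \<in> V G)"

definition set_nm :: "nat \<Rightarrow> nodemark \<Rightarrow> hostgraph \<Rightarrow> hostgraph" where
  "set_nm v m G = G\<lparr>nmark := (nmark G)(v := m)\<rparr>"

definition set_root :: "nat \<Rightarrow> bool \<Rightarrow> hostgraph \<Rightarrow> hostgraph" where
  "set_root v b G = G\<lparr>isroot := (isroot G)(v := b)\<rparr>"

definition set_em :: "nat \<Rightarrow> edgemark \<Rightarrow> hostgraph \<Rightarrow> hostgraph" where
  "set_em e m G = G\<lparr>emark := (emark G)(e := m)\<rparr>"

text \<open>Each rule only relabels marks / root flags of matched items (labels are
  variables and unchanged; nothing is created or deleted, so the dangling
  condition holds trivially). A root node of the left-hand side only matches
  a root; a non-root LHS node matches any host node. Matches are injective,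
  so distinct rule nodes 1 and 2 are mapped to distinct host nodes.\<close>

definition r_init :: "hostgraph \<Rightarrow> hostgraph \<Rightarrow> bool" where
  "r_init G H \<longleftrightarrow> (\<exists>v\<in>V G. nmark G v = NGrey \<and>
      H = set_root v True (set_nm v NRed G))"

definition r_unroot :: "hostgraph \<Rightarrow> hostgraph \<Rightarrow> bool" where
  "r_unroot G H \<longleftrightarrow> (\<exists>v\<in>V G. nmark G v = NRed \<and> isroot G v \<and>
      H = set_root v False (set_nm v NBlue G))"

definition r_set_flag :: "hostgraph \<Rightarrow> hostgraph \<Rightarrow> bool" where
  "r_set_flag G H \<longleftrightarrow> (\<exists>v\<in>V G. nmark G v = NRed \<and> isroot G v \<and>
      H = set_nm v NGreen G)"

definition r_flag :: "hostgraph \<Rightarrow> hostgraph \<Rightarrow> bool" where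
  "r_flag G H \<longleftrightarrow> (\<exists>v\<in>V G. nmark G v = NGreen \<and> isroot G v) \<and> H = G"

definition r_next_edge :: "hostgraph \<Rightarrow> hostgraph \<Rightarrow> bool" where
  "r_next_edge G H \<longleftrightarrow> (\<exists>v1\<in>V G. \<exists>v2\<in>V G. \<exists>e\<in>E G. v1 \<noteq> v2 \<and>
      nmark G v1 = NRed \<and> isroot G v1 \<and>
      src G e = v1 \<and> tgt G e = v2 \<and> emark G e = EUnmarked \<and>
      H = set_em e ERed G)"

definition r_ignore :: "hostgraph \<Rightarrow> hostgraph \<Rightarrow> bool" where
  "r_ignore G H \<longleftrightarrow> (\<exists>v1\<in>V G. \<exists>v2\<in>V G. \<exists>e\<in>E G. v1 \<noteq> v2 \<and>
      nmark G v1 = NRed \<and> isroot G v1 \<and> nmark G v2 = NBlue \<and>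
      src G e = v1 \<and> tgt G e = v2 \<and> emark G e = ERed \<and>
      H = set_em e EBlue G)"

definition r_move :: "hostgraph \<Rightarrow> hostgraph \<Rightarrow> bool" where
  "r_move G H \<longleftrightarrow> (\<exists>v1\<in>V G. \<exists>v2\<in>V G. \<exists>e\<in>E G. v1 \<noteq> v2 \<and>
      nmark G v1 = NRed \<and> isroot G v1 \<and> nmark G v2 = NGrey \<and>
      src G e = v1 \<and> tgt G e = v2 \<and> emark G e = ERed \<and>
      H = set_em e EDashed (set_root v2 True (set_nm v2 NRed
            (set_root v1 False G))))"

definition r_back :: "hostgraph \<Rightarrow> hostgraph \<Rightarrow> bool" where
  "r_back G H \<longleftrightarrow> (\<exists>v1\<in>V G. \<exists>v2\<in>V G. \<exists>e\<in>E G. v1 \<noteq> v2 \<and>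
      nmark G v1 = NRed \<and> nmark G v2 = NRed \<and> isroot G v2 \<and>
      src G e = v1 \<and> tgt G e = v2 \<and> emark G e = EDashed \<and>
      H = set_em e EBlue (set_root v2 False (set_nm v2 NBlue
            (set_root v1 True G))))"

definition r_loop :: "hostgraph \<Rightarrow> hostgraph \<Rightarrow> bool" where
  "r_loop G H \<longleftrightarrow> (\<exists>v\<in>V G. \<exists>e\<in>E G.
      nmark G v = NRed \<and> isroot G v \<and>
      src G e = v \<and> tgt G e = v \<and> emark G e = EUnmarked \<and>
      H = set_nm v NGreen G)"

text \<open>A rule-set call is given by the union of the application relations of
  its rules.\<close>
datatype cmd =
    Call "hostgraph \<Rightarrow> hostgraph \<Rightarrow> bool"
  | Seq cmd cmd
  | Loop cmd
  | Try cmd cmd cmd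
  | IfC cmd cmd cmd
  | Skip
  | FailC
  | Break

datatype outcome = Res hostgraph | Brk hostgraph | Failed

text \<open>Big-step (nondeterministic) semantics: outcomes of finished executions.\<close>
inductive exec :: "cmd \<Rightarrow> hostgraph \<Rightarrow> outcome \<Rightarrow> bool" where
  call_ok: "R G H \<Longrightarrow> exec (Call R) G (Res H)"
| call_fail: "(\<forall>H. \<not> R G H) \<Longrightarrow> exec (Call R) G Failed"
| seq_res: "exec P G (Res H) \<Longrightarrow> exec Q H out \<Longrightarrow> exec (Seq P Q) G out"
| seq_brk: "exec P G (Brk H) \<Longrightarrow> exec (Seq P Q) G (Brk H)"
| seq_fail: "exec P G Failed \<Longrightarrow> exec (Seq P Q) G Failed"
| loop_step: "exec P G (Res H) \<Longrightarrow> exec (Loop P) H out \<Longrightarrow> exec (Loop P) G out"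
| loop_brk: "exec P G (Brk H) \<Longrightarrow> exec (Loop P) G (Res H)"
| loop_fail: "exec P G Failed \<Longrightarrow> exec (Loop P) G (Res G)"
| try_res: "exec C G (Res H) \<Longrightarrow> exec P H out \<Longrightarrow> exec (Try C P Q) G out"
| try_brk: "exec C G (Brk H) \<Longrightarrow> exec (Try C P Q) G (Brk H)"
| try_fail: "exec C G Failed \<Longrightarrow> exec Q G out \<Longrightarrow> exec (Try C P Q) G out"
| if_res: "exec C G (Res H) \<Longrightarrow> exec P G out \<Longrightarrow> exec (IfC C P Q) G out"
| if_brk: "exec C G (Brk H) \<Longrightarrow> exec (IfC C P Q) G (Brk G)"
| if_fail: "exec C G Failed \<Longrightarrow> exec Q G out \<Longrightarrow> exec (IfC C P Q) G out"
| skip: "exec Skip G (Res G)"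
| fail: "exec FailC G Failed"
| brk: "exec Break G (Brk G)"

text \<open>Termination: every execution of the command from the given graph is
  finite (least fixed point: no infinite iteration of any loop along any
  nondeterministic branch).\<close>
inductive terminates :: "cmd \<Rightarrow> hostgraph \<Rightarrow> bool" where
  "terminates (Call R) G"
| "terminates P G \<Longrightarrow> (\<forall>H. exec P G (Res H) \<longrightarrow> terminates Q H)
     \<Longrightarrow> terminates (Seq P Q) G"
| "terminates P G \<Longrightarrow> (\<forall>H. exec P G (Res H) \<longrightarrow> terminates (Loop P) H)
     \<Longrightarrow> terminates (Loop P) G"
| "terminates C G \<Longrightarrow> (\<forall>H. exec C G (Res H) \<longrightarrow> terminates P H)
     \<Longrightarrow> (exec C G Failed \<longrightarrow> terminates Q G) \<Longrightarrow> terminates (Try C P Q) G"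
| "terminates C G \<Longrightarrow> ((\<exists>H. exec C G (Res H)) \<longrightarrow> terminates P G)
     \<Longrightarrow> (exec C G Failed \<longrightarrow> terminates Q G) \<Longrightarrow> terminates (IfC C P Q) G"
| "terminates Skip G"
| "terminates FailC G"
| "terminates Break G"

definition try1 :: "cmd \<Rightarrow> cmd" where "try1 C = Try C Skip Skip"

definition DFS :: cmd where
  "DFS = Try (Call r_next_edge)
            (Try (Call (\<lambda>G H. r_move G H \<or> r_ignore G H)) Skip
                 (Seq (Call r_set_flag) Break))
            (Seq (try1 (Call r_loop)) (Try (Call r_back) Skip Break))"

definition Check :: cmd where
  "Check = IfC (Call r_flag) FailC Skip"

definition is_dag :: cmd where
  "is_dag = Seq (Loop (Seq (Call r_init) (Seq (Loop DFS) (Try (Call r_unroot) Skip Break))))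
               Check"

end

theory Submission
  imports Defs
begin

(* Every rule of is-dag moves marks downwards: no node becomes grey, and no edge climbs in the
   order unmarked > red > dashed > blue. A successful pass of DFS strictly lowers some edge
   (by next_edge followed by move or ignore, or by back), so the inner loop is bounded by the
   total rank of the edges; a successful pass of the outer loop starts with init, which turns a
   grey node red, so the outer loop is bounded by the number of grey nodes. *)

fun calls_in :: "(hostgraph \<Rightarrow> hostgraph \<Rightarrow> bool) \<Rightarrow> cmd \<Rightarrow> bool" where
  "calls_in S (Call R) \<longleftrightarrow> (\<forall>G H. R G H \<longrightarrow> S G H)"
| "calls_in S (Seq P Q) \<longleftrightarrow> calls_in S P \<and> calls_in S Q"
| "calls_in S (Loop P) \<longleftrightarrow> calls_in S P"
| "calls_in S (Try C P Q) \<longleftrightarrow> calls_in S C \<and> calls_in S P \<and> calls_in S Q"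
| "calls_in S (IfC C P Q) \<longleftrightarrow> calls_in S C \<and> calls_in S P \<and> calls_in S Q"
| "calls_in S _ \<longleftrightarrow> True"

lemma exec_calls_in:
  assumes "exec c G out" and "calls_in S c" and "reflp S" and "transp S"
    and "out = Res H \<or> out = Brk H"
  shows "S G H"
  using assms
proof (induction arbitrary: H rule: exec.induct)
  case (seq_res P G G' Q out)
  then have "S G G'" and "S G' H" by simp_all
  then show ?case using \<open>transp S\<close> by (rule transpD[rotated])
next
  case (loop_step P G G' out)
  then have "S G G'" and "S G' H" by simp_all
  then show ?case using \<open>transp S\<close> by (rule transpD[rotated])
next
  case (try_res C G G' P out Q)
  then have "S G G'" and "S G' H" by simp_all
  then show ?case using \<open>transp S\<close> by (rule transpD[rotated])
qed (simp_all add: reflpD)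

fun loop_free :: "cmd \<Rightarrow> bool" where
  "loop_free (Loop P) \<longleftrightarrow> False"
| "loop_free (Seq P Q) \<longleftrightarrow> loop_free P \<and> loop_free Q"
| "loop_free (Try C P Q) \<longleftrightarrow> loop_free C \<and> loop_free P \<and> loop_free Q"
| "loop_free (IfC C P Q) \<longleftrightarrow> loop_free C \<and> loop_free P \<and> loop_free Q"
| "loop_free _ \<longleftrightarrow> True"

lemma terminates_loop_free: "loop_free c \<Longrightarrow> terminates c G"
  by (induction c arbitrary: G) (auto intro: terminates.intros)

lemma terminates_Loop_measure:
  fixes f :: "hostgraph \<Rightarrow> nat"
  assumes "I G"
    and body_terminates: "\<And>G. I G \<Longrightarrow> terminates P G"
    and body_decreases: "\<And>G H. I G \<Longrightarrow> exec P G (Res H) \<Longrightarrow> I H \<and> f H < f G"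
  shows "terminates (Loop P) G"
  using assms(1)
proof (induction "f G" arbitrary: G rule: less_induct)
  case less
  have "\<forall>H. exec P G (Res H) \<longrightarrow> terminates (Loop P) H"
    using less body_decreases by blast
  with body_terminates[OF less.prems] show ?case
    by (rule terminates.intros(3))
qed

inductive_cases exec_CallE: "exec (Call R) G out"
inductive_cases exec_SeqE: "exec (Seq P Q) G out"
inductive_cases exec_TryE: "exec (Try C P Q) G out"
inductive_cases exec_SkipE: "exec Skip G out"
inductive_cases exec_BreakE: "exec Break G out"

fun edge_rank :: "edgemark \<Rightarrow> nat" where
  "edge_rank EUnmarked = 3"
| "edge_rank ERed = 2"
| "edge_rank EDashed = 1"
| "edge_rank EBlue = 0"
| "edge_rank EGreen = 0"

definition edge_weight :: "hostgraph \<Rightarrow> nat" where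
  "edge_weight G = (\<Sum>e\<in>E G. edge_rank (emark G e))"

definition grey_nodes :: "hostgraph \<Rightarrow> nat set" where
  "grey_nodes G = {v \<in> V G. nmark G v = NGrey}"

definition mark_progress :: "hostgraph \<Rightarrow> hostgraph \<Rightarrow> bool" where
  "mark_progress G H \<longleftrightarrow> V H = V G \<and> E H = E G \<and> src H = src G \<and> tgt H = tgt G \<and>
     grey_nodes H \<subseteq> grey_nodes G \<and> (\<forall>e. edge_rank (emark H e) \<le> edge_rank (emark G e))"

lemma reflp_mark_progress: "reflp mark_progress"
  by (simp add: reflp_def mark_progress_def)

lemma transp_mark_progress: "transp mark_progress"
  unfolding transp_def mark_progress_def by (auto intro: order_trans)

lemma wf_graph_mark_progress: "mark_progress G H \<Longrightarrow> wf_graph G \<Longrightarrow> wf_graph H"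
  by (simp add: mark_progress_def wf_graph_def)

lemma exec_mark_progress: "calls_in mark_progress c \<Longrightarrow> exec c G (Res H) \<Longrightarrow> mark_progress G H"
  using reflp_mark_progress transp_mark_progress by (blast intro: exec_calls_in)

lemma edge_weight_mono: "mark_progress G H \<Longrightarrow> edge_weight H \<le> edge_weight G"
  unfolding mark_progress_def edge_weight_def by (simp add: sum_mono)

lemma edge_weight_set_em_less:
  assumes "finite (E G)" and "e \<in> E G" and "edge_rank m < edge_rank (emark G e)"
  shows "edge_weight (set_em e m G) < edge_weight G"
  unfolding edge_weight_def set_em_def
  using assms by (auto intro!: sum_strict_mono_ex1)

lemma set_nm_simps [simp]:
  "V (set_nm v m G) = V G" "E (set_nm v m G) = E G" "emark (set_nm v m G) = emark G"
  "nmark (set_nm v m G) = (nmark G)(v := m)"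
  by (simp_all add: set_nm_def)

lemma set_root_simps [simp]:
  "V (set_root v b G) = V G" "E (set_root v b G) = E G" "emark (set_root v b G) = emark G"
  "nmark (set_root v b G) = nmark G"
  by (simp_all add: set_root_def)

lemma edge_weight_set_nm [simp]: "edge_weight (set_nm v m G) = edge_weight G"
  by (simp add: edge_weight_def)

lemma edge_weight_set_root [simp]: "edge_weight (set_root v b G) = edge_weight G"
  by (simp add: edge_weight_def)

lemmas rule_defs = r_init_def r_unroot_def r_set_flag_def r_flag_def r_next_edge_def
  r_ignore_def r_move_def r_back_def r_loop_def

lemma calls_in_DFS: "calls_in mark_progress DFS"
  unfolding DFS_def try1_def
  by (auto simp: rule_defs mark_progress_def grey_nodes_def set_em_def set_nm_def set_root_def
      split: if_splits)

definition search_round :: cmd where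
  "search_round = Seq (Call r_init) (Seq (Loop DFS) (Try (Call r_unroot) Skip Break))"

lemma is_dag_eq: "is_dag = Seq (Loop search_round) Check"
  by (simp add: is_dag_def search_round_def)

lemma calls_in_search_round: "calls_in mark_progress search_round"
  using calls_in_DFS unfolding search_round_def
  by (auto simp: rule_defs mark_progress_def grey_nodes_def set_nm_def set_root_def
      split: if_splits)

lemma edge_weight_less_rules:
  assumes "finite (E G)" and "r_next_edge G H \<or> r_move G H \<or> r_ignore G H \<or> r_back G H"
  shows "edge_weight H < edge_weight G"
  using assms by (auto simp: rule_defs intro!: edge_weight_set_em_less[THEN less_le_trans])

lemma grey_nodes_r_init: "r_init G H \<Longrightarrow> grey_nodes H \<subset> grey_nodes G"
  by (auto simp: r_init_def grey_nodes_def split: if_splits)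

lemma exec_DFS_mark_progress: "exec DFS G (Res H) \<Longrightarrow> mark_progress G H"
  using calls_in_DFS by (rule exec_mark_progress)

lemma DFS_decreases_edge_weight:
  assumes "exec DFS G (Res H)" and "finite (E G)"
  shows "edge_weight H < edge_weight G"
proof -
  have calls: "calls_in mark_progress (Call r_next_edge)"
    "calls_in mark_progress (try1 (Call r_loop))"
    using calls_in_DFS by (simp_all add: DFS_def)
  from assms(1) obtain G' where "r_next_edge G G' \<and> (r_move G' H \<or> r_ignore G' H) \<or>
      exec (try1 (Call r_loop)) G (Res G') \<and> r_back G' H"
    unfolding DFS_def by (auto elim!: exec_TryE exec_SeqE exec_CallE exec_SkipE exec_BreakE)
  then show ?thesis
  proof
    assume step: "r_next_edge G G' \<and> (r_move G' H \<or> r_ignore G' H)"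
    then have "E G' = E G"
      using calls(1) by (simp add: mark_progress_def)
    with step assms(2) show ?thesis
      by (metis edge_weight_less_rules order.strict_trans)
  next
    assume step: "exec (try1 (Call r_loop)) G (Res G') \<and> r_back G' H"
    then have "mark_progress G G'"
      using calls(2) by (blast intro: exec_mark_progress)
    with step assms(2) show ?thesis
      by (metis edge_weight_less_rules edge_weight_mono less_le_trans mark_progress_def)
  qed
qed

lemma terminates_Loop_DFS: "wf_graph G \<Longrightarrow> terminates (Loop DFS) G"
proof (rule terminates_Loop_measure[where I = wf_graph and f = edge_weight])
  show "terminates DFS G" for G
    by (rule terminates_loop_free) (simp add: DFS_def try1_def)
  show "wf_graph H \<and> edge_weight H < edge_weight G"
    if "wf_graph G" and "exec DFS G (Res H)" for G H
  proof -
    have "finite (E G)"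
      using that(1) by (simp add: wf_graph_def)
    with that show ?thesis
      by (blast intro: wf_graph_mark_progress exec_DFS_mark_progress DFS_decreases_edge_weight)
  qed
qed

lemma exec_search_round_mark_progress: "exec search_round G (Res H) \<Longrightarrow> mark_progress G H"
  using calls_in_search_round by (rule exec_mark_progress)

lemma search_round_decreases_grey_nodes:
  assumes "exec search_round G (Res H)" and "finite (V G)"
  shows "card (grey_nodes H) < card (grey_nodes G)"
proof -
  from assms(1) obtain G' where init: "r_init G G'"
    and rest: "exec (Seq (Loop DFS) (Try (Call r_unroot) Skip Break)) G' (Res H)"
    unfolding search_round_def by (auto elim!: exec_SeqE exec_CallE intro: exec.seq_res)
  have "calls_in mark_progress (Seq (Loop DFS) (Try (Call r_unroot) Skip Break))"
    using calls_in_search_round by (simp add: search_round_def)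
  then have "mark_progress G' H"
    using rest by (rule exec_mark_progress)
  then have "grey_nodes H \<subset> grey_nodes G"
    using grey_nodes_r_init[OF init] by (auto simp: mark_progress_def)
  moreover have "finite (grey_nodes G)"
    using assms(2) by (simp add: grey_nodes_def)
  ultimately show ?thesis
    by (rule psubset_card_mono[rotated])
qed

lemma terminates_search_round:
  assumes "wf_graph G"
  shows "terminates search_round G"
  unfolding search_round_def
proof (intro terminates.intros(2) allI impI)
  fix H
  assume init: "exec (Call r_init) G (Res H)"
  have "calls_in mark_progress (Call r_init)"
    using calls_in_search_round by (simp add: search_round_def)
  then have "mark_progress G H"
    using init by (rule exec_mark_progress)
  with assms show "terminates (Loop DFS) H"
    by (blast intro: terminates_Loop_DFS wf_graph_mark_progress)
qed (auto intro: terminates_loop_free terminates.intros(1))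

lemma terminates_Loop_search_round: "wf_graph G \<Longrightarrow> terminates (Loop search_round) G"
proof (rule terminates_Loop_measure[where I = wf_graph and f = "\<lambda>G. card (grey_nodes G)"])
  show "terminates search_round G" if "wf_graph G" for G
    using that by (rule terminates_search_round)
  show "wf_graph H \<and> card (grey_nodes H) < card (grey_nodes G)"
    if "wf_graph G" and "exec search_round G (Res H)" for G H
  proof -
    have "finite (V G)"
      using that(1) by (simp add: wf_graph_def)
    with that show ?thesis
      by (blast intro: wf_graph_mark_progress exec_search_round_mark_progress
          search_round_decreases_grey_nodes)
  qed
qed

theorem mainTheorem6:
  assumes "wf_graph G"
    and "\<forall>v\<in>V G. nmark G v = NGrey \<and> \<not> isroot G v"
    and "\<forall>e\<in>E G. emark G e = EUnmarked"
  shows "terminates is_dag G"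
proof -
  have "terminates Check H" for H
    by (rule terminates_loop_free) (simp add: Check_def)
  with terminates_Loop_search_round[OF assms(1)] show ?thesis
    unfolding is_dag_eq by (blast intro: terminates.intros(2))
qed

end
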